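(* Let $\varphi\colon G\to G$ be an endomorphism of an abelian group $G$ and let $n\in\mathbb N$, $n\neq 0$. Then $\varphi$ is positively expansive if and only if $\varphi^n$ is positively expansive. Analogously, if $\varphi$ is an automorphism, then $\varphi$ is expansive if and only if $\varphi^n$ is expansive.
   Context: $\mathbb N=\{0,1,2,\dots\}$. An endomorphism $\varphi$ of an abelian group $G$ is positively expansive if there is a finite subgroup $S\leq G$ such that for every finite subgroup $F\leq G$ there is $m\in\mathbb N$ with $F\subseteq\sum_{k=0}^m\varphi^kS$. An automorphism $\varphi$ is expansive if there is a finite subgroup $S\leq G$ such that for every finite subgroup $F\leq G$ there is $m\in\mathbb N$ with $F\subseteq\sum_{|k|\leq m}\varphi^kS$. *)

theory Defs
  imports Main "HOL-Library.Set_Algebras"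
begin

text \<open>The abelian group G is the carrier type 'a of class ab_group_add.
  Sums of subsets are Minkowski sums (Set_Algebras), so a finite sum of
  subgroups is the subgroup they generate.\<close>

definition is_subgroup :: "'a::ab_group_add set \<Rightarrow> bool" where
  "is_subgroup H \<longleftrightarrow> 0 \<in> H \<and> (\<forall>x\<in>H. \<forall>y\<in>H. x - y \<in> H)"

definition endomorphism :: "('a::ab_group_add \<Rightarrow> 'a) \<Rightarrow> bool" where
  "endomorphism f \<longleftrightarrow> (\<forall>x y. f (x + y) = f x + f y)"

definition automorphism :: "('a::ab_group_add \<Rightarrow> 'a) \<Rightarrow> bool" where
  "automorphism f \<longleftrightarrow> endomorphism f \<and> bij f"

definition zpow :: "('a \<Rightarrow> 'a) \<Rightarrow> int \<Rightarrow> 'a \<Rightarrow> 'a" where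
  "zpow f k = (if 0 \<le> k then f ^^ nat k else (inv f) ^^ nat (- k))"

definition pos_expansive :: "('a::ab_group_add \<Rightarrow> 'a) \<Rightarrow> bool" where
  "pos_expansive f \<longleftrightarrow>
     (\<exists>S. finite S \<and> is_subgroup S \<and>
        (\<forall>F. finite F \<and> is_subgroup F \<longrightarrow>
           (\<exists>m::nat. F \<subseteq> (\<Sum>k\<in>{0..m}. (f ^^ k) ` S))))"

definition expansive :: "('a::ab_group_add \<Rightarrow> 'a) \<Rightarrow> bool" where
  "expansive f \<longleftrightarrow>
     (\<exists>S. finite S \<and> is_subgroup S \<and>
        (\<forall>F. finite F \<and> is_subgroup F \<longrightarrow>
           (\<exists>m::nat. F \<subseteq> (\<Sum>k\<in>{- int m..int m}. zpow f k ` S))))"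

end

theory Submission
  imports Defs
begin

(* If S witnesses (positive) expansiveness of \<phi>, then S' = S + \<phi> S + ... + \<phi>^(n-1) S
   witnesses it for \<phi>^n: every exponent i of a window {0..m} resp. {-m..m} is n k + j with
   0 <= j < n and k in the same window, so \<phi>^i S \<subseteq> (\<phi>^n)^k S'. Conversely a witness S for
   \<phi>^n also works for \<phi>, because the window sums of \<phi>^n are partial sums of the window sums
   of \<phi> over windows enlarged by the factor n. *)

lemma endomorphism_zero: "endomorphism f \<Longrightarrow> f 0 = (0::'a::ab_group_add)"
  unfolding endomorphism_def by (metis add_cancel_left_right)

lemma endomorphism_diff: "endomorphism f \<Longrightarrow> f (x - y) = f x - (f y::'a::ab_group_add)"
  unfolding endomorphism_def by (metis add_diff_cancel diff_add_cancel eq_diff_eq)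

lemma endomorphism_id: "endomorphism id"
  unfolding endomorphism_def by simp

lemma endomorphism_comp: "endomorphism f \<Longrightarrow> endomorphism g \<Longrightarrow> endomorphism (f \<circ> g)"
  unfolding endomorphism_def by simp

lemma endomorphism_funpow: "endomorphism f \<Longrightarrow> endomorphism (f ^^ n)"
  by (induction n) (auto simp: endomorphism_id endomorphism_comp)

lemma endomorphism_inv:
  assumes "endomorphism f" and "bij f"
  shows "endomorphism (inv f)"
  unfolding endomorphism_def
proof (intro allI)
  fix x y
  have "f (inv f x + inv f y) = x + y"
    using assms by (simp add: endomorphism_def bij_is_surj surj_f_inv_f)
  then show "inv f (x + y) = inv f x + inv f y"
    using assms(2) by (metis bij_is_inj inv_f_f)
qed

lemma endomorphism_zpow: "endomorphism f \<Longrightarrow> bij f \<Longrightarrow> endomorphism (zpow f k)"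
  unfolding zpow_def by (simp add: endomorphism_funpow endomorphism_inv)

lemma zero_in_image_subgroup: "endomorphism f \<Longrightarrow> is_subgroup S \<Longrightarrow> 0 \<in> f ` S"
  unfolding is_subgroup_def by (metis endomorphism_zero image_eqI)

lemma is_subgroup_image:
  assumes f: "endomorphism f" and S: "is_subgroup S"
  shows "is_subgroup (f ` S)"
  unfolding is_subgroup_def
proof (intro conjI ballI)
  show "0 \<in> f ` S"
    using f S by (rule zero_in_image_subgroup)
  fix x y assume "x \<in> f ` S" "y \<in> f ` S"
  then obtain u v where "u \<in> S" "v \<in> S" "x = f u" "y = f v" by blast
  moreover have "u - v \<in> S"
    using S \<open>u \<in> S\<close> \<open>v \<in> S\<close> unfolding is_subgroup_def by blast
  ultimately show "x - y \<in> f ` S"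
    using endomorphism_diff[OF f] by (metis image_eqI)
qed

lemma is_subgroup_set_sum:
  assumes "\<And>i. i \<in> I \<Longrightarrow> is_subgroup (A i)"
  shows "is_subgroup (sum A I)"
proof (cases "finite I")
  case False
  then show ?thesis by (simp add: is_subgroup_def)
next
  case True
  show ?thesis
    unfolding is_subgroup_def set_sum_alt[OF True]
  proof safe
    show "\<exists>s. 0 = sum s I \<and> (\<forall>i\<in>I. s i \<in> A i)"
      using assms by (intro exI[of _ "\<lambda>_. 0"]) (auto simp: is_subgroup_def)
  next
    fix s t assume "\<forall>i\<in>I. s i \<in> A i" "\<forall>i\<in>I. t i \<in> A i"
    then show "\<exists>u. sum s I - sum t I = sum u I \<and> (\<forall>i\<in>I. u i \<in> A i)"
      using assms by (intro exI[of _ "\<lambda>i. s i - t i"]) (auto simp: is_subgroup_def sum_subtractf)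
  qed
qed

lemma finite_set_sum: "(\<And>i. i \<in> I \<Longrightarrow> finite (A i)) \<Longrightarrow> finite (sum A I)"
  by (induction I rule: infinite_finite_induct) (auto intro: finite_set_plus)

lemma image_set_sum:
  assumes f: "endomorphism (f::'a::ab_group_add \<Rightarrow> 'a)"
  shows "f ` sum A I = (\<Sum>i\<in>I. f ` A i)"
proof -
  have "f ` X + f ` Y = f ` (X + Y)" for X Y
    using f unfolding endomorphism_def set_plus_def by (auto simp: image_iff) metis+
  moreover have "f ` {0} = {0}"
    using endomorphism_zero[OF f] by simp
  ultimately show ?thesis
    using sum_set_linear[of "image f" A I] by (simp add: o_def)
qed

lemma set_sum_mono_index:
  fixes A :: "'i \<Rightarrow> 'a::comm_monoid_add set"
  assumes "finite J" "I \<subseteq> J" "\<And>j. j \<in> J \<Longrightarrow> 0 \<in> A j"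
  shows "sum A I \<subseteq> sum A J"
proof -
  have "0 \<in> sum A (J - I)"
    using assms by (subst set_sum_alt) (auto intro!: exI[of _ "\<lambda>_. 0"])
  then have "sum A I \<subseteq> sum A (J - I) + sum A I"
    by (rule set_zero_plus2)
  also have "\<dots> = sum A J"
    by (rule sum.subset_diff[OF assms(2,1), symmetric])
  finally show ?thesis .
qed

lemma set_sum_reindex_subset:
  fixes A :: "'i \<Rightarrow> 'a::comm_monoid_add set"
  assumes "finite J" "inj_on g I" "g ` I \<subseteq> J" "\<And>j. j \<in> J \<Longrightarrow> 0 \<in> A j"
  shows "(\<Sum>i\<in>I. A (g i)) \<subseteq> sum A J"
proof -
  have "(\<Sum>i\<in>I. A (g i)) = sum A (g ` I)"
    using sum.reindex[OF assms(2), of A] by (simp add: o_def)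
  also have "\<dots> \<subseteq> sum A J"
    by (rule set_sum_mono_index[OF assms(1,3,4)])
  finally show ?thesis .
qed

lemma set_sum_subset_reindex:
  fixes A :: "'i \<Rightarrow> 'a::comm_monoid_add set"
  assumes "finite J" "inj_on g J" "I \<subseteq> g ` J" "\<And>j. j \<in> J \<Longrightarrow> 0 \<in> A (g j)"
  shows "sum A I \<subseteq> (\<Sum>j\<in>J. A (g j))"
proof -
  have "sum A I \<subseteq> sum A (g ` J)"
    using assms(1,3,4) by (intro set_sum_mono_index) auto
  also have "\<dots> = (\<Sum>j\<in>J. A (g j))"
    using sum.reindex[OF assms(2), of A] by (simp add: o_def)
  finally show ?thesis .
qed

definition covers_finite_subgroups ::
    "('i \<Rightarrow> 'a::ab_group_add \<Rightarrow> 'a) \<Rightarrow> (nat \<Rightarrow> 'i set) \<Rightarrow> 'a set \<Rightarrow> bool" where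
  "covers_finite_subgroups T W S \<longleftrightarrow>
     (\<forall>F. finite F \<and> is_subgroup F \<longrightarrow> (\<exists>m. F \<subseteq> (\<Sum>k\<in>W m. T k ` S)))"

lemma pos_expansive_iff_covers:
  "pos_expansive f \<longleftrightarrow>
     (\<exists>S. finite S \<and> is_subgroup S \<and> covers_finite_subgroups (\<lambda>k. f ^^ k) (\<lambda>m. {0..m}) S)"
  unfolding pos_expansive_def covers_finite_subgroups_def ..

lemma expansive_iff_covers:
  "expansive f \<longleftrightarrow>
     (\<exists>S. finite S \<and> is_subgroup S \<and>
        covers_finite_subgroups (zpow f) (\<lambda>m. {- int m..int m}) S)"
  unfolding expansive_def covers_finite_subgroups_def ..

lemma covers_finite_subgroups_subsequence:
  fixes T :: "'i \<Rightarrow> 'a::ab_group_add \<Rightarrow> 'a"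
  assumes cov: "covers_finite_subgroups (\<lambda>k. T (g k)) W' S"
    and S: "is_subgroup S" and T: "\<And>i. endomorphism (T i)"
    and W: "\<And>m. finite (W m)" and g: "\<And>m. inj_on g (W' m)"
    and window: "\<And>m. \<exists>m'. g ` W' m \<subseteq> W m'"
  shows "covers_finite_subgroups T W S"
  unfolding covers_finite_subgroups_def
proof (intro allI impI)
  fix F :: "'a set" assume "finite F \<and> is_subgroup F"
  then obtain m where F: "F \<subseteq> (\<Sum>k\<in>W' m. T (g k) ` S)"
    using cov unfolding covers_finite_subgroups_def by blast
  obtain m' where "g ` W' m \<subseteq> W m'"
    using window by blast
  then have "(\<Sum>k\<in>W' m. T (g k) ` S) \<subseteq> (\<Sum>i\<in>W m'. T i ` S)"
    using W g T S by (intro set_sum_reindex_subset zero_in_image_subgroup)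
  with F show "\<exists>m. F \<subseteq> (\<Sum>i\<in>W m. T i ` S)"
    by blast
qed

lemma covers_finite_subgroups_blocks:
  fixes U :: "'k \<Rightarrow> 'a::ab_group_add \<Rightarrow> 'a"
  assumes cov: "covers_finite_subgroups T W S"
    and S: "is_subgroup S" and f: "endomorphism f" and U: "\<And>k. endomorphism (U k)"
    and T_split: "\<And>k j. T (h k j) = U k \<circ> f ^^ j"
    and W': "\<And>m. finite (W' m)" and h: "\<And>m. inj_on (\<lambda>(k, j). h k j) (W' m \<times> {..<n})"
    and window: "\<And>m. \<exists>m'. W m \<subseteq> (\<lambda>(k, j). h k j) ` (W' m' \<times> {..<n})"
  shows "covers_finite_subgroups U W' (\<Sum>j<n. (f ^^ j) ` S)"
  unfolding covers_finite_subgroups_def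
proof (intro allI impI)
  fix F :: "'a set" assume "finite F \<and> is_subgroup F"
  then obtain m where F: "F \<subseteq> (\<Sum>i\<in>W m. T i ` S)"
    using cov unfolding covers_finite_subgroups_def by blast
  obtain m' where m': "W m \<subseteq> (\<lambda>(k, j). h k j) ` (W' m' \<times> {..<n})"
    using window by blast
  have "(\<Sum>i\<in>W m. T i ` S) \<subseteq> (\<Sum>p\<in>W' m' \<times> {..<n}. T ((\<lambda>(k, j). h k j) p) ` S)"
    by (rule set_sum_subset_reindex[OF _ h m'])
      (use W' in \<open>auto simp: T_split simp del: comp_apply
          intro!: zero_in_image_subgroup endomorphism_comp endomorphism_funpow f U S\<close>)
  also have "\<dots> = (\<Sum>k\<in>W' m'. \<Sum>j<n. U k ` (f ^^ j) ` S)"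
    by (simp add: sum.cartesian_product split_def T_split image_comp)
  also have "\<dots> = (\<Sum>k\<in>W' m'. U k ` (\<Sum>j<n. (f ^^ j) ` S))"
    by (simp add: image_set_sum U)
  finally show "\<exists>m. F \<subseteq> (\<Sum>k\<in>W' m. U k ` (\<Sum>j<n. (f ^^ j) ` S))"
    using F by blast
qed

lemma zpow_succ:
  assumes "bij f"
  shows "zpow f (a + 1) = zpow f a \<circ> f"
proof (cases "a \<ge> 0")
  case True
  then have "nat (a + 1) = Suc (nat a)" by simp
  with True show ?thesis
    by (simp add: zpow_def funpow_Suc_right del: funpow.simps)
next
  case False
  define c where "c = nat (- a - 1)"
  with False have "a = - int c - 1" and "nat (- a) = Suc c"
    by simp_all
  then have "zpow f (a + 1) = inv f ^^ c"
    by (cases "c = 0") (simp_all add: zpow_def)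
  moreover have "zpow f a = inv f ^^ c \<circ> inv f"
    using False \<open>nat (- a) = Suc c\<close> by (simp add: zpow_def funpow_Suc_right del: funpow.simps)
  moreover have "inv f \<circ> f = id"
    using assms by (simp add: bij_is_inj)
  ultimately show ?thesis
    by (simp add: comp_assoc)
qed

lemma zpow_add_of_nat:
  assumes "bij f"
  shows "zpow f (a + int j) = zpow f a \<circ> f ^^ j"
proof (induction j)
  case (Suc j)
  have "zpow f (a + int (Suc j)) = zpow f ((a + int j) + 1)"
    by (simp add: algebra_simps)
  also have "\<dots> = zpow f a \<circ> f ^^ j \<circ> f"
    by (simp only: zpow_succ[OF assms] Suc.IH)
  finally show ?case
    by (simp add: funpow_Suc_right o_assoc del: funpow.simps)
qed simp

lemma zpow_funpow:
  assumes "bij f"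
  shows "zpow (f ^^ n) k = zpow f (int n * k)"
proof (cases "k \<ge> 0")
  case True
  then show ?thesis
    by (simp add: zpow_def funpow_mult nat_mult_distrib mult.commute)
next
  case False
  have "nat (- (int n * k)) = n * nat (- k)"
    using nat_mult_distrib[of "int n" "- k"] by simp
  moreover have "\<not> 0 \<le> int n * k \<or> n = 0"
    using False by (auto simp: zero_le_mult_iff)
  ultimately show ?thesis
    using False by (auto simp: zpow_def inv_fn[OF assms] funpow_mult)
qed

lemma inj_on_mult_add_of_nat:
  "inj_on (\<lambda>(k, j). of_nat n * k + of_nat j :: 'i::linordered_euclidean_semiring) (K \<times> {..<n})"
proof (rule inj_onI, clarsimp)
  fix k k' :: 'i and j j' :: nat
  assume "j < n" "j' < n" and eq: "of_nat n * k + of_nat j = of_nat n * k' + of_nat j'"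
  have "of_nat j = (of_nat n * k + of_nat j) mod (of_nat n :: 'i)"
    using \<open>j < n\<close> by (simp flip: of_nat_mod)
  also have "\<dots> = of_nat j'"
    using \<open>j' < n\<close> by (simp only: eq) (simp flip: of_nat_mod)
  finally have "j = j'" by simp
  with eq \<open>j < n\<close> show "k = k' \<and> j = j'" by simp
qed

lemma atLeastAtMost_subset_mult_add_image:
  assumes "0 < n"
  shows "{0..m} \<subseteq> (\<lambda>(k, j). n * k + j) ` ({0..m} \<times> {..<n::nat})"
proof
  fix i assume "i \<in> {0..m}"
  then have "i div n \<in> {0..m}" and "i mod n < n"
    using assms by (auto intro: div_le_dividend[THEN order_trans])
  then show "i \<in> (\<lambda>(k, j). n * k + j) ` ({0..m} \<times> {..<n})"
    by (auto intro!: image_eqI[of _ _ "(i div n, i mod n)"])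
qed

lemma abs_div_le_abs: "0 < (n::int) \<Longrightarrow> \<bar>i div n\<bar> \<le> \<bar>i\<bar>"
  by (smt (verit) div_by_1 pos_imp_zdiv_neg_iff zdiv_mono2 zdiv_mono2_neg)

lemma symmetric_interval_subset_mult_add_image:
  assumes "0 < n"
  shows "{- int m..int m} \<subseteq> (\<lambda>(k, j). int n * k + int j) ` ({- int m..int m} \<times> {..<n})"
proof
  fix i assume i: "i \<in> {- int m..int m}"
  have "\<bar>i div int n\<bar> \<le> int m"
    using i abs_div_le_abs[of "int n" i] assms by auto
  moreover have "i = int n * (i div int n) + int (nat (i mod int n))" "nat (i mod int n) < n"
    using assms by (simp_all add: nat_less_iff)
  ultimately show "i \<in> (\<lambda>(k, j). int n * k + int j) ` ({- int m..int m} \<times> {..<n})"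
    by (intro image_eqI[of _ _ "(i div int n, nat (i mod int n))"]) (simp_all add: abs_le_iff)
qed

lemma finite_subgroup_orbit_sum:
  assumes "finite S" "is_subgroup S" "endomorphism f"
  shows "finite (\<Sum>j<n. (f ^^ j) ` S)" "is_subgroup (\<Sum>j<n. (f ^^ j) ` S)"
  using assms by (auto intro: finite_set_sum is_subgroup_set_sum is_subgroup_image endomorphism_funpow)

lemma pos_expansive_funpow:
  assumes f: "endomorphism f" and n: "0 < n" and "pos_expansive f"
  shows "pos_expansive (f ^^ n)"
proof -
  obtain S where S: "finite S" "is_subgroup S"
    and cov: "covers_finite_subgroups (\<lambda>k. f ^^ k) (\<lambda>m. {0..m}) S"
    using \<open>pos_expansive f\<close> by (auto simp: pos_expansive_iff_covers)
  have "covers_finite_subgroups (\<lambda>k. (f ^^ n) ^^ k) (\<lambda>m. {0..m}) (\<Sum>j<n. (f ^^ j) ` S)"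
  proof (rule covers_finite_subgroups_blocks[OF cov S(2) f, where h = "\<lambda>k j. n * k + j"])
    show "f ^^ (n * k + j) = (f ^^ n) ^^ k \<circ> f ^^ j" for k j
      by (simp add: funpow_add funpow_mult mult.commute)
    show "inj_on (\<lambda>(k, j). n * k + j) ({0..m} \<times> {..<n})" for m
      using inj_on_mult_add_of_nat[where 'i = nat] by simp
    show "\<exists>m'. {0..m} \<subseteq> (\<lambda>(k, j). n * k + j) ` ({0..m'} \<times> {..<n})" for m
      using atLeastAtMost_subset_mult_add_image[OF n] by blast
  qed (simp_all add: f endomorphism_funpow)
  with finite_subgroup_orbit_sum[OF S f] show ?thesis
    by (auto simp: pos_expansive_iff_covers)
qed

lemma pos_expansive_funpowD:
  assumes f: "endomorphism f" and n: "0 < n" and "pos_expansive (f ^^ n)"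
  shows "pos_expansive f"
proof -
  obtain S where S: "finite S" "is_subgroup S"
    and cov: "covers_finite_subgroups (\<lambda>k. (f ^^ n) ^^ k) (\<lambda>m. {0..m}) S"
    using \<open>pos_expansive (f ^^ n)\<close> by (auto simp: pos_expansive_iff_covers)
  have "covers_finite_subgroups (\<lambda>k. f ^^ k) (\<lambda>m. {0..m}) S"
  proof (rule covers_finite_subgroups_subsequence[where g = "\<lambda>k. n * k", OF _ S(2)])
    show "covers_finite_subgroups (\<lambda>k. f ^^ (n * k)) (\<lambda>m. {0..m}) S"
      using cov by (simp add: funpow_mult mult.commute)
    show "inj_on (\<lambda>k. n * k) {0..m}" for m
      using n by (simp add: inj_on_def)
    show "\<exists>m'. (\<lambda>k. n * k) ` {0..m} \<subseteq> {0..m'}" for m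
      by (rule exI[of _ "n * m"]) auto
  qed (simp_all add: f endomorphism_funpow)
  with S show ?thesis
    by (auto simp: pos_expansive_iff_covers)
qed

lemma expansive_funpow:
  assumes f: "automorphism f" and n: "0 < n" and "expansive f"
  shows "expansive (f ^^ n)"
proof -
  from f have endo: "endomorphism f" and "bij f"
    by (simp_all add: automorphism_def)
  obtain S where S: "finite S" "is_subgroup S"
    and cov: "covers_finite_subgroups (zpow f) (\<lambda>m. {- int m..int m}) S"
    using \<open>expansive f\<close> by (auto simp: expansive_iff_covers)
  have "covers_finite_subgroups (zpow (f ^^ n)) (\<lambda>m. {- int m..int m}) (\<Sum>j<n. (f ^^ j) ` S)"
  proof (rule covers_finite_subgroups_blocks[OF cov S(2) endo, where h = "\<lambda>k j. int n * k + int j"])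
    show "zpow f (int n * k + int j) = zpow (f ^^ n) k \<circ> f ^^ j" for k j
      by (simp add: \<open>bij f\<close> zpow_add_of_nat zpow_funpow)
    show "inj_on (\<lambda>(k, j). int n * k + int j) ({- int m..int m} \<times> {..<n})" for m
      by (rule inj_on_mult_add_of_nat)
    show "\<exists>m'. {- int m..int m} \<subseteq> (\<lambda>(k, j). int n * k + int j) ` ({- int m'..int m'} \<times> {..<n})" for m
      using symmetric_interval_subset_mult_add_image[OF n] by blast
  qed (simp_all add: endo \<open>bij f\<close> endomorphism_zpow endomorphism_funpow)
  with finite_subgroup_orbit_sum[OF S endo] show ?thesis
    by (auto simp: expansive_iff_covers)
qed

lemma expansive_funpowD:
  assumes f: "automorphism f" and n: "0 < n" and "expansive (f ^^ n)"
  shows "expansive f"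
proof -
  from f have endo: "endomorphism f" and "bij f"
    by (simp_all add: automorphism_def)
  obtain S where S: "finite S" "is_subgroup S"
    and cov: "covers_finite_subgroups (zpow (f ^^ n)) (\<lambda>m. {- int m..int m}) S"
    using \<open>expansive (f ^^ n)\<close> by (auto simp: expansive_iff_covers)
  have "covers_finite_subgroups (zpow f) (\<lambda>m. {- int m..int m}) S"
  proof (rule covers_finite_subgroups_subsequence[where g = "\<lambda>k. int n * k", OF _ S(2)])
    have "zpow (f ^^ n) = (\<lambda>k. zpow f (int n * k))"
      by (rule ext) (rule zpow_funpow[OF \<open>bij f\<close>])
    with cov show "covers_finite_subgroups (\<lambda>k. zpow f (int n * k)) (\<lambda>m. {- int m..int m}) S"
      by simp
    show "inj_on (\<lambda>k. int n * k) {- int m..int m}" for m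
      using n by (simp add: inj_on_def)
    show "\<exists>m'. (\<lambda>k. int n * k) ` {- int m..int m} \<subseteq> {- int m'..int m'}" for m
    proof (intro exI[of _ "n * m"] image_subsetI)
      fix k assume "k \<in> {- int m..int m}"
      then have "\<bar>k\<bar> \<le> int m"
        by (simp add: abs_le_iff)
      then have "\<bar>int n * k\<bar> \<le> int n * int m"
        by (simp add: abs_mult mult_left_mono)
      then show "int n * k \<in> {- int (n * m)..int (n * m)}"
        by auto
    qed
  qed (simp_all add: endo \<open>bij f\<close> endomorphism_zpow)
  with S show ?thesis
    by (auto simp: expansive_iff_covers)
qed

theorem proposition2p10:
  fixes \<phi> :: "'a::ab_group_add \<Rightarrow> 'a" and n :: nat
  assumes "endomorphism \<phi>" and "n \<noteq> 0"
  shows "(pos_expansive \<phi> \<longleftrightarrow> pos_expansive (\<phi> ^^ n))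
       \<and> (automorphism \<phi> \<longrightarrow> (expansive \<phi> \<longleftrightarrow> expansive (\<phi> ^^ n)))"
proof -
  from \<open>n \<noteq> 0\<close> have n: "0 < n"
    by simp
  have "pos_expansive \<phi> \<longleftrightarrow> pos_expansive (\<phi> ^^ n)"
    using pos_expansive_funpow[OF assms(1) n] pos_expansive_funpowD[OF assms(1) n] by blast
  moreover have "expansive \<phi> \<longleftrightarrow> expansive (\<phi> ^^ n)" if "automorphism \<phi>"
    using expansive_funpow[OF that n] expansive_funpowD[OF that n] by blast
  ultimately show ?thesis
    by blast
qed

end
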